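(* Let $G$ be a simple directed graph on $[n]$ and $\tau\subseteq[n]$ a directed clique of $G$. Then there exists a unique $\sigma\subseteq\tau$ such that $\sigma$ is a target-free clique in $G|_\tau$.
   Context: $\tau$ is a directed clique if its nodes can be ordered $1,\dots,|\tau|$ so that $i\to j$ whenever $i<j$. A clique is a nonempty set of nodes pairwise bidirectionally connected. In $G|_\tau$ (the induced subgraph), a target of $\sigma\subseteq\tau$ is a node $k\in\tau\setminus\sigma$ with $i\to k$ for all $i\in\sigma$; target-free means having no target. *)

theory Defs
  imports Main
begin

(* A simple directed graph on [n] = {1..n}: edge relation E, E i j meaning i -> j,
   no self-loops, all edges between vertices in {1..n}. *)
definition simple_digraph :: "nat \<Rightarrow> (nat \<Rightarrow> nat \<Rightarrow> bool) \<Rightarrow> bool" where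
  "simple_digraph n E \<longleftrightarrow>
     (\<forall>i j. E i j \<longrightarrow> i \<in> {1..n} \<and> j \<in> {1..n} \<and> i \<noteq> j)"

definition directed_clique :: "(nat \<Rightarrow> nat \<Rightarrow> bool) \<Rightarrow> nat set \<Rightarrow> bool" where
  "directed_clique E \<tau> \<longleftrightarrow> finite \<tau> \<and> \<tau> \<noteq> {} \<and>
     (\<exists>f. bij_betw f {1..card \<tau>} \<tau> \<and>
          (\<forall>i\<in>{1..card \<tau>}. \<forall>j\<in>{1..card \<tau>}. i < j \<longrightarrow> E (f i) (f j)))"

definition clique :: "(nat \<Rightarrow> nat \<Rightarrow> bool) \<Rightarrow> nat set \<Rightarrow> bool" where
  "clique E \<sigma> \<longleftrightarrow> \<sigma> \<noteq> {} \<and> (\<forall>i\<in>\<sigma>. \<forall>j\<in>\<sigma>. i \<noteq> j \<longrightarrow> E i j \<and> E j i)"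

(* in G|tau, a target of sigma is k in tau - sigma with i -> k for all i in sigma *)
definition is_target :: "(nat \<Rightarrow> nat \<Rightarrow> bool) \<Rightarrow> nat set \<Rightarrow> nat set \<Rightarrow> nat \<Rightarrow> bool" where
  "is_target E \<tau> \<sigma> k \<longleftrightarrow> k \<in> \<tau> - \<sigma> \<and> (\<forall>i\<in>\<sigma>. E i k)"

definition target_free :: "(nat \<Rightarrow> nat \<Rightarrow> bool) \<Rightarrow> nat set \<Rightarrow> nat set \<Rightarrow> bool" where
  "target_free E \<tau> \<sigma> \<longleftrightarrow> \<not> (\<exists>k. is_target E \<tau> \<sigma> k)"

end

(* Rank the vertices of the directed clique tau so that lower rank points to higher rank.
   Existence: adding a new vertex x of lowest rank to S, x points to every vertex of S, so a
   target-free clique sigma of S either extends to insert x sigma (if sigma points to x, making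
   x bidirectionally joined to sigma) or stays target-free (x is then no target of sigma).
   Uniqueness: if sigma1 and sigma2 are two target-free cliques, the vertex of highest rank
   in their symmetric difference would be a target of the one that misses it.
   Neither the ambient vertex set [n] nor the absence of loops plays any role. *)
theory Submission
  imports Defs
begin

definition directed_ranking :: "(nat \<Rightarrow> nat \<Rightarrow> bool) \<Rightarrow> nat set \<Rightarrow> (nat \<Rightarrow> 'b::linorder) \<Rightarrow> bool" where
  "directed_ranking E T g \<longleftrightarrow> inj_on g T \<and> (\<forall>x\<in>T. \<forall>y\<in>T. g x < g y \<longrightarrow> E x y)"

lemma directed_clique_has_ranking:
  assumes "directed_clique E \<tau>"
  obtains g :: "nat \<Rightarrow> nat" where "directed_ranking E \<tau> g"
proof -
  obtain f where bij: "bij_betw f {1..card \<tau>} \<tau>"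
    and ord: "\<forall>i\<in>{1..card \<tau>}. \<forall>j\<in>{1..card \<tau>}. i < j \<longrightarrow> E (f i) (f j)"
    using assms unfolding directed_clique_def by blast
  define g where "g = inv_into {1..card \<tau>} f"
  have g: "bij_betw g \<tau> {1..card \<tau>}"
    unfolding g_def using bij by (rule bij_betw_inv_into)
  have f_g: "f (g x) = x" if "x \<in> \<tau>" for x
    unfolding g_def using bij that by (rule bij_betw_inv_into_right)
  have "directed_ranking E \<tau> g"
    unfolding directed_ranking_def
  proof (intro conjI ballI impI)
    show "inj_on g \<tau>" using g by (rule bij_betw_imp_inj_on)
    fix x y assume "x \<in> \<tau>" "y \<in> \<tau>" "g x < g y"
    then have "E (f (g x)) (f (g y))"
      using ord bij_betw_apply[OF g] by blast
    then show "E x y" using f_g \<open>x \<in> \<tau>\<close> \<open>y \<in> \<tau>\<close> by simp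
  qed
  then show thesis by (rule that)
qed

lemma target_free_clique_insert_source:
  assumes "x \<notin> S" and source: "\<forall>y\<in>S. E x y"
    and "\<sigma> \<subseteq> S" "clique E \<sigma>" "target_free E S \<sigma>"
  shows "\<exists>\<sigma>'\<subseteq>insert x S. clique E \<sigma>' \<and> target_free E (insert x S) \<sigma>'"
proof (cases "\<forall>i\<in>\<sigma>. E i x")
  case True
  have "clique E (insert x \<sigma>)"
    using assms True unfolding clique_def by blast
  moreover have "target_free E (insert x S) (insert x \<sigma>)"
    using assms unfolding target_free_def is_target_def by auto
  ultimately show ?thesis using \<open>\<sigma> \<subseteq> S\<close> by blast
next
  case False
  then have "target_free E (insert x S) \<sigma>"
    using assms unfolding target_free_def is_target_def by auto
  then show ?thesis using assms by blast
qed

lemma target_free_clique_exists: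
  assumes "finite T" "T \<noteq> {}" "directed_ranking E T g"
  shows "\<exists>\<sigma>\<subseteq>T. clique E \<sigma> \<and> target_free E T \<sigma>"
  using assms
proof (induction T rule: finite_psubset_induct)
  case (psubset T)
  define x where "x = arg_min_on g T"
  define S where "S = T - {x}"
  have "x \<in> T" and x_min: "\<forall>y\<in>T. g x \<le> g y"
    using arg_min_if_finite[OF psubset.hyps psubset.prems(1), of g] unfolding x_def
    by (simp_all add: not_less)
  then have T: "T = insert x S" and "x \<notin> S" unfolding S_def by auto
  have source: "\<forall>y\<in>S. E x y"
  proof
    fix y assume "y \<in> S"
    then have "g x \<noteq> g y"
      using psubset.prems(2) \<open>x \<in> T\<close> unfolding S_def directed_ranking_def inj_on_def by blast
    with x_min \<open>y \<in> S\<close> have "g x < g y" unfolding S_def by force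
    then show "E x y"
      using psubset.prems(2) \<open>x \<in> T\<close> \<open>y \<in> S\<close> unfolding S_def directed_ranking_def by blast
  qed
  show ?case
  proof (cases "S = {}")
    case True
    then show ?thesis unfolding T
      by (intro exI[of _ "{x}"]) (auto simp: clique_def target_free_def is_target_def)
  next
    case False
    have "directed_ranking E S g"
      using psubset.prems(2) unfolding S_def directed_ranking_def by (auto intro: inj_on_subset)
    then obtain \<sigma> where "\<sigma> \<subseteq> S" "clique E \<sigma>" "target_free E S \<sigma>"
      using psubset.IH[of S] False \<open>x \<in> T\<close> unfolding S_def by blast
    then show ?thesis
      unfolding T by (rule target_free_clique_insert_source[of x S E \<sigma>, OF \<open>x \<notin> S\<close> source])
  qed
qed

lemma is_target_top_of_difference:
  assumes rank: "directed_ranking E T g"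
    and "\<sigma>1 \<subseteq> T" "\<sigma>2 \<subseteq> T" "clique E \<sigma>2" "k \<in> \<sigma>2 - \<sigma>1"
    and top: "\<forall>i\<in>\<sigma>1. g k < g i \<longrightarrow> i \<in> \<sigma>2"
  shows "is_target E T \<sigma>1 k"
  unfolding is_target_def
proof (intro conjI ballI)
  show "k \<in> T - \<sigma>1" using assms by blast
  fix i assume "i \<in> \<sigma>1"
  then have "i \<noteq> k" "g i \<noteq> g k"
    using assms unfolding directed_ranking_def inj_on_def by blast+
  then consider "g i < g k" | "g k < g i" by (meson linorder_neqE)
  then show "E i k"
  proof cases
    case 1
    then show ?thesis using rank assms \<open>i \<in> \<sigma>1\<close> unfolding directed_ranking_def by blast
  next
    case 2
    then have "i \<in> \<sigma>2" using top \<open>i \<in> \<sigma>1\<close> by blast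
    then show ?thesis using assms \<open>i \<noteq> k\<close> unfolding clique_def by blast
  qed
qed

lemma target_free_clique_unique:
  assumes "finite T" and rank: "directed_ranking E T g"
    and \<sigma>1: "\<sigma>1 \<subseteq> T" "clique E \<sigma>1" "target_free E T \<sigma>1"
    and \<sigma>2: "\<sigma>2 \<subseteq> T" "clique E \<sigma>2" "target_free E T \<sigma>2"
  shows "\<sigma>1 = \<sigma>2"
proof (rule ccontr)
  assume "\<sigma>1 \<noteq> \<sigma>2"
  define D where "D = (\<sigma>1 - \<sigma>2) \<union> (\<sigma>2 - \<sigma>1)"
  have "finite \<sigma>1" "finite \<sigma>2"
    using \<open>finite T\<close> \<sigma>1(1) \<sigma>2(1) by (simp_all add: finite_subset)
  then have "finite D" unfolding D_def by simp
  have "D \<noteq> {}" using \<open>\<sigma>1 \<noteq> \<sigma>2\<close> unfolding D_def by blast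
  then have "Max (g ` D) \<in> g ` D" using \<open>finite D\<close> by simp
  then obtain k where "k \<in> D" and "g k = Max (g ` D)" by (metis imageE)
  then have top: "\<forall>d\<in>D. g d \<le> g k" using \<open>finite D\<close> by simp
  have above_agree: "i \<in> \<sigma>1 \<longleftrightarrow> i \<in> \<sigma>2" if "g k < g i" for i
  proof -
    have "i \<notin> D" using top that by (auto simp: not_le[symmetric])
    then show ?thesis unfolding D_def by blast
  qed
  show False
  proof (cases "k \<in> \<sigma>2")
    case True
    then have "is_target E T \<sigma>1 k"
      using is_target_top_of_difference[OF rank \<sigma>1(1) \<sigma>2(1,2)] \<open>k \<in> D\<close> above_agree
      unfolding D_def by blast
    then show False using \<sigma>1(3) unfolding target_free_def by blast
  next
    case False
    then have "is_target E T \<sigma>2 k"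
      using is_target_top_of_difference[OF rank \<sigma>2(1) \<sigma>1(1,2)] \<open>k \<in> D\<close> above_agree
      unfolding D_def by blast
    then show False using \<sigma>2(3) unfolding target_free_def by blast
  qed
qed

theorem lemma5:
  fixes n :: nat and E :: "nat \<Rightarrow> nat \<Rightarrow> bool" and \<tau> :: "nat set"
  assumes "simple_digraph n E"
    and "\<tau> \<subseteq> {1..n}"
    and "directed_clique E \<tau>"
  shows "\<exists>!\<sigma>. \<sigma> \<subseteq> \<tau> \<and> clique E \<sigma> \<and> target_free E \<tau> \<sigma>"
proof -
  have "finite \<tau>" "\<tau> \<noteq> {}" using assms(3) unfolding directed_clique_def by blast+
  obtain g :: "nat \<Rightarrow> nat" where rank: "directed_ranking E \<tau> g"
    using directed_clique_has_ranking[OF assms(3)] .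
  show ?thesis
    using target_free_clique_exists[OF \<open>finite \<tau>\<close> \<open>\<tau> \<noteq> {}\<close> rank]
      target_free_clique_unique[OF \<open>finite \<tau>\<close> rank]
    by blast
qed

end
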